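(* Let $\mathbf{F}=(F_1,\ldots,F_d)$ be a vector of $d$ pairwise distinct (non-isomorphic) finite simple graphs with no isolated vertices, and let $n_0\ge\max\{|F_1|,\ldots,|F_d|\}$. Then for every $n\ge n_0$, the curvy zonotope $Z_{\mathbf{F};n}$ is not contained in any affine hyperplane of $\mathbb{R}^d$.
   Context: $|F|$ is the number of vertices of $F$. For a positive integer $n$, a graph $F$, and real variables $\mathbf{x}=(x_{ij})_{i,j\in[n]}$ with $x_{ij}=x_{ji}$, let \[ p_{F;n}(\mathbf{x})= \frac{1}{n^{|F|}} \sum_{\phi : V(F) \rightarrow [n]} \,\, \prod_{ij \in E(F)} x_{\phi(i)\phi(j)},\] the sum over all maps $\phi:V(F)\to[n]$. The curvy zonotope is \[ Z_{\mathbf{F};n} = \left\{ (p_{F_1;n}(\mathbf{x}), \ldots, p_{F_d;n}(\mathbf{x})) \mid \mathbf{x} \in [0,1]^{n^2},\ x_{ij}=x_{ji} \text{ for all } i,j \right\}\subseteq\mathbb{R}^d. \] *)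

theory Defs
  imports Main "HOL-Library.FuncSet" Complex_Main
begin

text \<open>A finite simple graph on the vertex set {0..<k}: edges are stored as pairs (i,j) with i < j < k.\<close>
type_synonym graph = "nat \<times> (nat \<times> nat) set"

definition nverts :: "graph \<Rightarrow> nat" where
  "nverts F = fst F"

definition edges :: "graph \<Rightarrow> (nat \<times> nat) set" where
  "edges F = snd F"

definition adj :: "graph \<Rightarrow> nat \<Rightarrow> nat \<Rightarrow> bool" where
  "adj F i j \<longleftrightarrow> (i, j) \<in> edges F \<or> (j, i) \<in> edges F"

definition simple_graph :: "graph \<Rightarrow> bool" where
  "simple_graph F \<longleftrightarrow> 0 < nverts F \<and> (\<forall>(i, j) \<in> edges F. i < j \<and> j < nverts F)"

definition no_isolated :: "graph \<Rightarrow> bool" where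
  "no_isolated F \<longleftrightarrow> (\<forall>v < nverts F. \<exists>u < nverts F. adj F v u)"

definition graph_iso :: "graph \<Rightarrow> graph \<Rightarrow> bool" where
  "graph_iso F G \<longleftrightarrow> (\<exists>f. bij_betw f {..<nverts F} {..<nverts G} \<and>
      (\<forall>i < nverts F. \<forall>j < nverts F. adj F i j \<longleftrightarrow> adj G (f i) (f j)))"

definition hom_poly :: "graph \<Rightarrow> nat \<Rightarrow> (nat \<Rightarrow> nat \<Rightarrow> real) \<Rightarrow> real" where
  "hom_poly F n x = (1 / real n ^ nverts F) *
     (\<Sum>\<phi> \<in> {..<nverts F} \<rightarrow>\<^sub>E {..<n}. \<Prod>(i, j) \<in> edges F. x (\<phi> i) (\<phi> j))"

definition admissible :: "nat \<Rightarrow> (nat \<Rightarrow> nat \<Rightarrow> real) \<Rightarrow> bool" where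
  "admissible n x \<longleftrightarrow> (\<forall>i < n. \<forall>j < n. 0 \<le> x i j \<and> x i j \<le> 1 \<and> x i j = x j i)"

definition curvy_zonotope :: "graph list \<Rightarrow> nat \<Rightarrow> real list set" where
  "curvy_zonotope Fs n = {map (\<lambda>F. hom_poly F n x) Fs | x. admissible n x}"

definition affine_hyperplane :: "nat \<Rightarrow> real list set \<Rightarrow> bool" where
  "affine_hyperplane d H \<longleftrightarrow> (\<exists>a b. (\<exists>l < d. a l \<noteq> (0::real)) \<and>
      H = {y. length y = d \<and> (\<Sum>l < d. a l * y ! l) = b})"

end

theory Submission
  imports Defs
begin

text \<open>
  Evaluate the densities at the 0/1 matrices of finite edge sets \<open>S\<close> on \<open>[n]\<close>. Then
  \<open>n^|F| p\<^sub>F(1\<^sub>S)\<close> counts the maps \<open>\<phi>\<close> whose edge image lies in \<open>S\<close>, i.e. it is the sum over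
  \<open>T \<subseteq> S\<close> of the number \<open>c\<^sub>F(T)\<close> of maps with edge image exactly \<open>T\<close>. If the zonotope lay in
  the hyperplane \<open>\<Sum> a\<^sub>l p\<^sub>F\<^sub>l = b\<close>, Moebius inversion over finite sets would give
  \<open>\<Sum> a\<^sub>l n^-|F\<^sub>l| c\<^sub>F\<^sub>l(T) = 0\<close> for every nonempty \<open>T\<close>. Take \<open>T = E(F\<^sub>k)\<close> with \<open>|F\<^sub>k|\<close> maximal
  among the \<open>F\<^sub>l\<close> with \<open>a\<^sub>l \<noteq> 0\<close>: a map from \<open>F\<^sub>l\<close> onto the edges of \<open>F\<^sub>k\<close> with
  \<open>|F\<^sub>l| \<le> |F\<^sub>k|\<close> is an isomorphism (surjective on vertices as \<open>F\<^sub>k\<close> has no isolated vertices,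
  hence injective by counting), so only the term of \<open>F\<^sub>k\<close> survives, and it is nonzero
  because of the identity map.
\<close>

lemma min_max_pair_eq_iff:
  fixes a b c d :: "'a::linorder"
  shows "(min a b, max a b) = (min c d, max c d) \<longleftrightarrow> (a = c \<and> b = d) \<or> (a = d \<and> b = c)"
  by (cases "a \<le> b"; cases "c \<le> d") (auto simp: min_def max_def)

lemma prod_of_bool:
  "finite A \<Longrightarrow> (\<Prod>x\<in>A. of_bool (P x) :: 'a::comm_semiring_1) = of_bool (\<forall>x\<in>A. P x)"
  by (induction A rule: finite_induct) auto

lemma sum_Pow_eq_imp_eq:
  fixes f g :: "'a set \<Rightarrow> 'b::ab_group_add"
  assumes "\<And>S. finite S \<Longrightarrow> (\<Sum>T\<in>Pow S. f T) = (\<Sum>T\<in>Pow S. g T)"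
  shows "finite S \<Longrightarrow> f S = g S"
proof (induction S rule: finite_psubset_induct)
  case (psubset S)
  have "(\<Sum>T\<in>Pow S - {S}. f T) = (\<Sum>T\<in>Pow S - {S}. g T)"
    by (rule sum.cong) (auto intro: psubset.IH)
  with assms[OF psubset.hyps] show ?case
    using psubset.hyps by (simp add: sum.remove[of "Pow S" S])
qed

lemma adj_lt_nverts:
  assumes "simple_graph F" "adj F u v"
  shows "u < nverts F" "v < nverts F"
  using assms by (auto simp: simple_graph_def adj_def)

lemma simple_graph_finite_edges:
  assumes "simple_graph F"
  shows "finite (edges F)"
proof (rule finite_subset)
  show "edges F \<subseteq> {..<nverts F} \<times> {..<nverts F}"
    using assms by (auto simp: simple_graph_def)
qed simp

lemma edges_nonempty:
  assumes "simple_graph F" "no_isolated F"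
  shows "edges F \<noteq> {}"
  using assms by (fastforce simp: simple_graph_def no_isolated_def adj_def)

lemma adj_iff_min_max:
  assumes "simple_graph F"
  shows "adj F u v \<longleftrightarrow> (min u v, max u v) \<in> edges F"
  using assms by (auto simp: simple_graph_def adj_def min_def max_def)

definition edge_image :: "graph \<Rightarrow> (nat \<Rightarrow> nat) \<Rightarrow> (nat \<times> nat) set" where
  "edge_image F \<phi> = (\<lambda>(i, j). (min (\<phi> i) (\<phi> j), max (\<phi> i) (\<phi> j))) ` edges F"

definition edge_image_count :: "graph \<Rightarrow> nat \<Rightarrow> (nat \<times> nat) set \<Rightarrow> nat" where
  "edge_image_count F n T = card {\<phi> \<in> {..<nverts F} \<rightarrow>\<^sub>E {..<n}. edge_image F \<phi> = T}"

lemma adj_iff_edge_image: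
  assumes "simple_graph F" "edge_image G \<phi> = edges F"
  shows "adj F u v \<longleftrightarrow> (\<exists>i j. adj G i j \<and> u = \<phi> i \<and> v = \<phi> j)"
proof
  assume "adj F u v"
  then have "(min u v, max u v) \<in> edge_image G \<phi>"
    using assms by (simp add: adj_iff_min_max)
  then obtain i j where ij: "(i, j) \<in> edges G"
    and "(min u v, max u v) = (min (\<phi> i) (\<phi> j), max (\<phi> i) (\<phi> j))"
    by (auto simp: edge_image_def)
  then have "(u = \<phi> i \<and> v = \<phi> j) \<or> (u = \<phi> j \<and> v = \<phi> i)"
    by (simp only: min_max_pair_eq_iff)
  moreover have "adj G i j" "adj G j i"
    using ij by (auto simp: adj_def)
  ultimately show "\<exists>i j. adj G i j \<and> u = \<phi> i \<and> v = \<phi> j"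
    by blast
next
  assume "\<exists>i j. adj G i j \<and> u = \<phi> i \<and> v = \<phi> j"
  then obtain i j where "(i, j) \<in> edges G \<or> (j, i) \<in> edges G" "u = \<phi> i" "v = \<phi> j"
    by (auto simp: adj_def)
  then have "(min u v, max u v) \<in> edge_image G \<phi>"
    by (force simp: edge_image_def min.commute max.commute)
  then show "adj F u v"
    using assms by (simp add: adj_iff_min_max)
qed

lemma graph_iso_if_edge_image_eq:
  assumes G: "simple_graph G" "no_isolated G"
    and F: "simple_graph F" "no_isolated F"
    and le: "nverts G \<le> nverts F"
    and img: "edge_image G \<phi> = edges F"
  shows "graph_iso G F"
proof -
  note adj_F = adj_iff_edge_image[OF F(1) img]
  have "\<phi> ` {..<nverts G} \<subseteq> {..<nverts F}"
  proof
    fix w assume "w \<in> \<phi> ` {..<nverts G}"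
    then obtain v u where "w = \<phi> v" "adj G v u"
      using G(2) by (auto simp: no_isolated_def)
    then have "adj F w (\<phi> u)"
      using adj_F by blast
    then show "w \<in> {..<nverts F}"
      using F(1) adj_lt_nverts by blast
  qed
  moreover have "{..<nverts F} \<subseteq> \<phi> ` {..<nverts G}"
  proof
    fix w assume "w \<in> {..<nverts F}"
    then obtain u where "adj F w u"
      using F(2) by (auto simp: no_isolated_def)
    then obtain i j where "adj G i j" "w = \<phi> i"
      using adj_F by blast
    then show "w \<in> \<phi> ` {..<nverts G}"
      using G(1) adj_lt_nverts by blast
  qed
  ultimately have onto: "\<phi> ` {..<nverts G} = {..<nverts F}"
    by blast
  have "card (\<phi> ` {..<nverts G}) = card {..<nverts G}"
    using onto le card_image_le[of "{..<nverts G}" \<phi>] by simp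
  then have inj: "inj_on \<phi> {..<nverts G}"
    by (simp add: inj_on_iff_eq_card)
  have "adj G i j \<longleftrightarrow> adj F (\<phi> i) (\<phi> j)" if "i < nverts G" "j < nverts G" for i j
  proof
    assume "adj F (\<phi> i) (\<phi> j)"
    then obtain i' j' where ij': "adj G i' j'" "\<phi> i = \<phi> i'" "\<phi> j = \<phi> j'"
      using adj_F by blast
    moreover have "i' < nverts G" "j' < nverts G"
      using G(1) ij'(1) by (simp_all add: adj_lt_nverts)
    ultimately show "adj G i j"
      using inj that by (metis inj_onD lessThan_iff)
  qed (use adj_F in blast)
  with inj onto show ?thesis
    unfolding graph_iso_def bij_betw_def by blast
qed

lemma edge_image_count_edges_pos:
  assumes "simple_graph F" "nverts F \<le> n"
  shows "0 < edge_image_count F n (edges F)"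
proof -
  let ?\<iota> = "restrict id {..<nverts F}"
  have "?\<iota> \<in> {..<nverts F} \<rightarrow>\<^sub>E {..<n}"
    using assms(2) by auto
  moreover have "edge_image F ?\<iota> = edges F"
  proof -
    have "(\<lambda>(i, j). (min (?\<iota> i) (?\<iota> j), max (?\<iota> i) (?\<iota> j))) e = e" if "e \<in> edges F" for e
      using assms(1) that by (fastforce simp: simple_graph_def)
    then show ?thesis
      unfolding edge_image_def by simp
  qed
  ultimately have "{\<phi> \<in> {..<nverts F} \<rightarrow>\<^sub>E {..<n}. edge_image F \<phi> = edges F} \<noteq> {}"
    by blast
  then show ?thesis
    by (simp add: edge_image_count_def card_gt_0_iff finite_PiE)
qed

lemma edge_image_count_eq_0_if_not_iso:
  assumes "simple_graph G" "no_isolated G" "simple_graph F" "no_isolated F"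
    and "nverts G \<le> nverts F" "\<not> graph_iso G F"
  shows "edge_image_count G n (edges F) = 0"
proof -
  have "{\<phi> \<in> {..<nverts G} \<rightarrow>\<^sub>E {..<n}. edge_image G \<phi> = edges F} = {}"
    using assms graph_iso_if_edge_image_eq by blast
  then show ?thesis
    unfolding edge_image_count_def by (metis card.empty)
qed

definition edge_indicator :: "(nat \<times> nat) set \<Rightarrow> nat \<Rightarrow> nat \<Rightarrow> real" where
  "edge_indicator S u v = of_bool ((min u v, max u v) \<in> S)"

lemma admissible_edge_indicator: "admissible n (edge_indicator S)"
  by (simp add: admissible_def edge_indicator_def min.commute max.commute)

lemma hom_poly_edge_indicator:
  assumes "finite (edges F)" "finite S"
  shows "hom_poly F n (edge_indicator S) =
    (\<Sum>T\<in>Pow S. real (edge_image_count F n T)) / real n ^ nverts F"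
proof -
  let ?\<Phi> = "{..<nverts F} \<rightarrow>\<^sub>E {..<n}"
  have prod_eq: "(\<Prod>(i, j)\<in>edges F. edge_indicator S (\<phi> i) (\<phi> j))
      = (\<Sum>T\<in>Pow S. of_bool (edge_image F \<phi> = T))" for \<phi>
    using assms by (simp add: edge_indicator_def case_prod_unfold prod_of_bool edge_image_def
        image_subset_iff)
  have "(\<Sum>\<phi>\<in>?\<Phi>. \<Prod>(i, j)\<in>edges F. edge_indicator S (\<phi> i) (\<phi> j))
      = (\<Sum>T\<in>Pow S. \<Sum>\<phi>\<in>?\<Phi>. of_bool (edge_image F \<phi> = T))"
    unfolding prod_eq by (rule sum.swap)
  also have "\<dots> = (\<Sum>T\<in>Pow S. real (edge_image_count F n T))"
    by (simp add: edge_image_count_def finite_PiE Int_def)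
  finally show ?thesis
    by (simp add: hom_poly_def)
qed

lemma edge_image_count_combination:
  fixes G :: "'i \<Rightarrow> graph" and a :: "'i \<Rightarrow> real"
  assumes "finite I" "\<forall>i\<in>I. finite (edges (G i))"
    and on_indicators: "\<And>S. finite S \<Longrightarrow> (\<Sum>i\<in>I. a i * hom_poly (G i) n (edge_indicator S)) = b"
    and "finite T"
  shows "(\<Sum>i\<in>I. a i / real n ^ nverts (G i) * real (edge_image_count (G i) n T))
    = (if T = {} then b else 0)"
proof (rule sum_Pow_eq_imp_eq[OF _ \<open>finite T\<close>])
  fix S :: "(nat \<times> nat) set"
  assume "finite S"
  have "(\<Sum>U\<in>Pow S. \<Sum>i\<in>I. a i / real n ^ nverts (G i) * real (edge_image_count (G i) n U))
      = (\<Sum>i\<in>I. a i * hom_poly (G i) n (edge_indicator S))"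
    using assms(2) \<open>finite S\<close>
    by (subst sum.swap) (simp add: hom_poly_edge_indicator sum_distrib_left sum_divide_distrib)
  also have "\<dots> = b"
    using \<open>finite S\<close> by (rule on_indicators)
  also have "\<dots> = (\<Sum>U\<in>Pow S. if U = {} then b else 0)"
    using \<open>finite S\<close> by simp
  finally show "(\<Sum>U\<in>Pow S. \<Sum>i\<in>I. a i / real n ^ nverts (G i) * real (edge_image_count (G i) n U))
      = (\<Sum>U\<in>Pow S. if U = {} then b else 0)" .
qed

lemma edge_image_counts_independent:
  fixes G :: "'i \<Rightarrow> graph" and c :: "'i \<Rightarrow> real"
  assumes graphs: "\<forall>i\<in>I. simple_graph (G i) \<and> no_isolated (G i) \<and> nverts (G i) \<le> n"
    and non_iso: "\<forall>i\<in>I. \<forall>j\<in>I. i \<noteq> j \<longrightarrow> \<not> graph_iso (G i) (G j)"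
    and relation: "\<And>T. finite T \<Longrightarrow> T \<noteq> {} \<Longrightarrow> (\<Sum>i\<in>I. c i * real (edge_image_count (G i) n T)) = 0"
    and "finite I" "i \<in> I"
  shows "c i = 0"
proof (rule ccontr)
  assume "c i \<noteq> 0"
  then obtain k where k: "k \<in> I" "c k \<noteq> 0"
    and k_max: "\<And>j. j \<in> I \<Longrightarrow> c j \<noteq> 0 \<Longrightarrow> nverts (G j) \<le> nverts (G k)"
    using ex_has_greatest_nat[of "\<lambda>j. j \<in> I \<and> c j \<noteq> 0" i "\<lambda>j. nverts (G j)" "Suc n"]
      \<open>i \<in> I\<close> graphs by (auto simp: less_Suc_eq_le)
  let ?T = "edges (G k)"
  have "c j * real (edge_image_count (G j) n ?T) = 0" if "j \<in> I - {k}" for j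
  proof (cases "c j = 0")
    case False
    then have "edge_image_count (G j) n ?T = 0"
      using that k graphs non_iso k_max by (intro edge_image_count_eq_0_if_not_iso) auto
    then show ?thesis
      by simp
  qed simp
  then have "(\<Sum>j\<in>I - {k}. c j * real (edge_image_count (G j) n ?T)) = 0"
    by (rule sum.neutral[OF ballI])
  then have "(\<Sum>j\<in>I. c j * real (edge_image_count (G j) n ?T)) = c k * real (edge_image_count (G k) n ?T)"
    using \<open>finite I\<close> k(1) by (simp add: sum.remove)
  moreover have "finite ?T" "?T \<noteq> {}"
    using k(1) graphs by (simp_all add: simple_graph_finite_edges edges_nonempty)
  ultimately have "c k * real (edge_image_count (G k) n ?T) = 0"
    using relation by simp
  moreover have "0 < edge_image_count (G k) n ?T"
    using k(1) graphs by (simp add: edge_image_count_edges_pos)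
  ultimately show False
    using k(2) by simp
qed

theorem theorem4p6:
  fixes Fs :: "graph list" and n0 n :: nat
  assumes graphs: "\<forall>F \<in> set Fs. simple_graph F \<and> no_isolated F"
    and distinct: "\<forall>k < length Fs. \<forall>l < length Fs. k \<noteq> l \<longrightarrow> \<not> graph_iso (Fs ! k) (Fs ! l)"
    and n0: "\<forall>F \<in> set Fs. nverts F \<le> n0"
    and n: "n0 \<le> n"
  shows "\<not> (\<exists>H. affine_hyperplane (length Fs) H \<and> curvy_zonotope Fs n \<subseteq> H)"
proof
  assume "\<exists>H. affine_hyperplane (length Fs) H \<and> curvy_zonotope Fs n \<subseteq> H"
  then obtain a b l where l: "l < length Fs" "a l \<noteq> 0"
    and Z: "curvy_zonotope Fs n \<subseteq> {y. length y = length Fs \<and> (\<Sum>l < length Fs. a l * y ! l) = b}"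
    unfolding affine_hyperplane_def by blast
  define c where "c l = a l / real n ^ nverts (Fs ! l)" for l
  have Fs: "\<forall>l\<in>{..<length Fs}. simple_graph (Fs ! l) \<and> no_isolated (Fs ! l) \<and> nverts (Fs ! l) \<le> n"
    using graphs n0 n by (auto intro: order_trans)
  have "(\<Sum>l<length Fs. a l * hom_poly (Fs ! l) n (edge_indicator S)) = b" for S
  proof -
    have "map (\<lambda>F. hom_poly F n (edge_indicator S)) Fs \<in> curvy_zonotope Fs n"
      using admissible_edge_indicator unfolding curvy_zonotope_def by blast
    then show ?thesis
      using Z by auto
  qed
  then have relation: "(\<Sum>l<length Fs. c l * real (edge_image_count (Fs ! l) n T)) = 0"
    if "finite T" "T \<noteq> {}" for T
    using edge_image_count_combination[of "{..<length Fs}" "(!) Fs"] Fs that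
    by (simp add: c_def simple_graph_finite_edges)
  have "c l = 0"
    by (rule edge_image_counts_independent[of "{..<length Fs}" "(!) Fs" n c])
      (use Fs distinct relation l(1) in auto)
  moreover have "0 < nverts (Fs ! l)" "nverts (Fs ! l) \<le> n"
    using Fs l(1) by (auto simp: simple_graph_def)
  ultimately show False
    using l(2) by (simp add: c_def)
qed

end
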